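(* Let $d\in\mathbb{N}$, $N=d$, $\mathcal{N}=\{1,\dots,d\}$, and consider the switched system $x(t+1)=A_{\nu(t)}x(t)+b_{\nu(t)}\mu(t)$ with state set $\mathcal{X}=\mathbb{R}^d$ and set of admissible continuous controls $\mathcal{U}=\mathbb{R}$. Suppose each $A_i$, $i\in\mathcal{N}$, is a diagonal matrix with all diagonal entries nonzero, and each $b_i\in\mathbb{R}^d$ has its $i$-th entry nonzero and all other entries zero. Define $\mathcal{X}_0=\{0_d\}$, $\mathcal{X}_j=\{x\in\mathbb{R}^d: x_j\neq0,\ x_i=0 \text{ for all } i\neq j\}$ for $j=1,\dots,d$, and $\mathcal{X}_{d+1}=\mathbb{R}^d\setminus\bigcup_{j=0}^d\mathcal{X}_j$. Then $(\mathcal{X}_j)_{j=0}^{d+1}$ is a state-space abstraction of this switched system.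
   Context: A family $(\mathcal{X}_j)_{j=0}^n$ of subsets of $\mathcal{X}$ is a state-space abstraction of the switched system with subsystems $(A_i,b_i)$, $i\in\mathcal{N}$, and admissible continuous control set $\mathcal{U}$ if: (i) $\mathcal{X}_0=\{0_d\}$; (ii) the $\mathcal{X}_j$ are pairwise disjoint; (iii) $\bigcup_{j=0}^n\mathcal{X}_j=\mathcal{X}$; (iv) for each $j\in\{1,\dots,n\}$ and $i\in\mathcal{N}$ there is $k\in\{0,\dots,n\}$ with $A_ix\in\mathcal{X}_k$ for all $x\in\mathcal{X}_j$; (v) for each $j\in\{1,\dots,n\}$ and $i\in\mathcal{N}$ there is $\ell\in\{0,\dots,n\}$ such that for every $x\in\mathcal{X}_j$, $A_ix+b_i\mu(x)\in\mathcal{X}_\ell$ for some $\mu(x)\in\mathcal{U}\setminus\{0\}$. *)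

theory Defs
  imports "HOL-Analysis.Analysis"
begin

definition state_space_abstraction ::
  "(real^'d) set \<Rightarrow> 'i set \<Rightarrow> ('i \<Rightarrow> real^'d^'d) \<Rightarrow> ('i \<Rightarrow> real^'d) \<Rightarrow> real set
    \<Rightarrow> nat \<Rightarrow> (nat \<Rightarrow> (real^'d) set) \<Rightarrow> bool" where
  "state_space_abstraction X NN A b U n XX \<longleftrightarrow>
     XX 0 = {0} \<and>
     (\<forall>j\<in>{0..n}. \<forall>k\<in>{0..n}. j \<noteq> k \<longrightarrow> XX j \<inter> XX k = {}) \<and>
     (\<Union>j\<in>{0..n}. XX j) = X \<and>
     (\<forall>j\<in>{1..n}. \<forall>i\<in>NN. \<exists>k\<in>{0..n}. \<forall>x\<in>XX j. A i *v x \<in> XX k) \<and>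
     (\<forall>j\<in>{1..n}. \<forall>i\<in>NN. \<exists>l\<in>{0..n}. \<forall>x\<in>XX j.
         \<exists>\<mu>\<in>U - {0}. A i *v x + \<mu> *\<^sub>R b i \<in> XX l)"

end

theory Submission
  imports Defs
begin

text \<open>A diagonal matrix with nonzero diagonal does not change which coordinates of a vector
  vanish, and adding a suitable nonzero multiple of the axis vector b_i to such an image makes
  exactly one further coordinate, e(i), nonzero. Every cell of the partition is determined by the
  set of nonzero coordinates (empty, the singleton of e(j), or at least two coordinates), so the
  free dynamics keeps every cell invariant, while the controlled dynamics maps the cell of e(i)
  into itself and every other nonzero cell into the last one.\<close>

definition vec_support :: "'a::zero^'n \<Rightarrow> 'n set" where
  "vec_support x = {k. x $ k \<noteq> 0}"

lemma vec_support_eq_empty_iff [simp]: "vec_support x = {} \<longleftrightarrow> x = 0"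
  by (auto simp: vec_support_def vec_eq_iff)

lemma vec_support_zero [simp]: "vec_support 0 = {}"
  by (simp add: vec_support_def)

lemma matrix_vector_mult_diagonal:
  fixes M :: "'a::semiring_1^'n^'n"
  assumes "\<forall>k l. k \<noteq> l \<longrightarrow> M $ k $ l = 0"
  shows "(M *v x) $ k = M $ k $ k * x $ k"
proof -
  have "(M *v x) $ k = (\<Sum>l\<in>UNIV. M $ k $ l * x $ l)"
    by (simp add: matrix_vector_mult_def)
  also have "\<dots> = (\<Sum>l\<in>UNIV. if l = k then M $ k $ k * x $ k else 0)"
    using assms by (intro sum.cong) auto
  finally show ?thesis by simp
qed

lemma vec_support_diagonal_mult:
  fixes M :: "'a::{semiring_1, semiring_no_zero_divisors}^'n^'n"
  assumes "\<forall>k l. k \<noteq> l \<longrightarrow> M $ k $ l = 0" and "\<forall>k. M $ k $ k \<noteq> 0"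
  shows "vec_support (M *v x) = vec_support x"
  using assms by (simp add: vec_support_def matrix_vector_mult_diagonal)

lemma exists_nonzero_shift_nonzero:
  fixes c \<beta> :: real
  assumes "\<beta> \<noteq> 0"
  obtains \<mu> where "\<mu> \<noteq> 0" "c + \<mu> * \<beta> \<noteq> 0"
proof (cases "c + \<beta> = 0")
  case True
  then show ?thesis using that[of 2] assms by auto
next
  case False
  then show ?thesis using that[of 1] by auto
qed

lemma vec_support_diagonal_mult_add_axis:
  fixes M :: "real^'n^'n"
  assumes "\<forall>k l. k \<noteq> l \<longrightarrow> M $ k $ l = 0" and "\<forall>k. M $ k $ k \<noteq> 0"
    and "vec_support b = {p}"
  obtains \<mu> where "\<mu> \<noteq> 0" "vec_support (M *v x + \<mu> *\<^sub>R b) = insert p (vec_support x)"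
proof -
  have "b $ p \<noteq> 0" "\<forall>k. k \<noteq> p \<longrightarrow> b $ k = 0"
    using assms(3) by (auto simp: vec_support_def)
  moreover obtain \<mu> where "\<mu> \<noteq> 0" "M $ p $ p * x $ p + \<mu> * b $ p \<noteq> 0"
    using exists_nonzero_shift_nonzero[OF \<open>b $ p \<noteq> 0\<close>] by blast
  ultimately have "vec_support (M *v x + \<mu> *\<^sub>R b) = insert p (vec_support x)"
    using assms(1,2) by (auto simp: vec_support_def matrix_vector_mult_diagonal)
  with \<open>\<mu> \<noteq> 0\<close> show ?thesis
    using that by blast
qed

definition axis_cell :: "(nat \<Rightarrow> 'n) \<Rightarrow> nat \<Rightarrow> (real^'n) set" where
  "axis_cell e j = (if j = 0 then {0}
     else {x. x $ e j \<noteq> 0 \<and> (\<forall>k. k \<noteq> e j \<longrightarrow> x $ k = 0)})"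

definition axis_partition :: "(nat \<Rightarrow> 'n) \<Rightarrow> nat \<Rightarrow> (real^'n) set" where
  "axis_partition e j = (if j \<le> CARD('n) then axis_cell e j
     else UNIV - (\<Union>k\<in>{0..CARD('n)}. axis_cell e k))"

lemma mem_axis_cell_iff:
  "x \<in> axis_cell e j \<longleftrightarrow> vec_support x = (if j = 0 then {} else {e j})"
  by (auto simp: axis_cell_def vec_support_def vec_eq_iff)

lemma mem_axis_partition_iff_support:
  fixes e :: "nat \<Rightarrow> 'n::finite"
  assumes "j \<in> {1..CARD('n)}"
  shows "x \<in> axis_partition e j \<longleftrightarrow> vec_support x = {e j}"
  using assms by (simp add: axis_partition_def mem_axis_cell_iff)

lemma mem_axis_partition_last_iff:
  fixes e :: "nat \<Rightarrow> 'n::finite"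
  assumes "bij_betw e {1..CARD('n)} UNIV"
  shows "x \<in> axis_partition e (CARD('n) + 1) \<longleftrightarrow> (\<forall>p. \<not> vec_support x \<subseteq> {p})"
proof -
  have "(\<exists>k\<in>{0..CARD('n)}. x \<in> axis_cell e k) \<longleftrightarrow> (\<exists>p. vec_support x \<subseteq> {p})"
  proof
    assume "\<exists>p. vec_support x \<subseteq> {p}"
    then obtain p where "vec_support x = {} \<or> vec_support x = {p}"
      by (auto simp: subset_singleton_iff)
    moreover obtain j where "j \<in> {1..CARD('n)}" "e j = p"
      using assms by (metis UNIV_I bij_betw_iff_bijections)
    ultimately show "\<exists>k\<in>{0..CARD('n)}. x \<in> axis_cell e k"
      by (metis atLeastAtMost_iff le0 mem_axis_cell_iff not_one_le_zero)
  qed (auto simp: mem_axis_cell_iff split: if_splits)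
  then show ?thesis by (simp add: axis_partition_def)
qed

lemma axis_cell_disjoint:
  fixes e :: "nat \<Rightarrow> 'n::finite"
  assumes e: "bij_betw e {1..CARD('n)} UNIV"
    and "j \<le> CARD('n)" "k \<le> CARD('n)" "j \<noteq> k"
  shows "axis_cell e j \<inter> axis_cell e k = {}"
proof -
  have "(if j = 0 then {} else {e j}) \<noteq> (if k = 0 then {} else {e k})"
    using inj_onD[OF bij_betw_imp_inj_on[OF e], of j k] assms(2-4) by auto
  then show ?thesis
    by (auto simp: mem_axis_cell_iff)
qed

lemma axis_partition_disjoint:
  fixes e :: "nat \<Rightarrow> 'n::finite"
  assumes e: "bij_betw e {1..CARD('n)} UNIV"
    and jk: "j \<in> {0..CARD('n) + 1}" "k \<in> {0..CARD('n) + 1}" "j \<noteq> k"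
  shows "axis_partition e j \<inter> axis_partition e k = {}"
proof -
  consider "j \<le> CARD('n)" "k \<le> CARD('n)" | "j = CARD('n) + 1" "k \<le> CARD('n)"
    | "j \<le> CARD('n)" "k = CARD('n) + 1"
    using jk by fastforce
  then show ?thesis
    by cases (auto simp: axis_partition_def axis_cell_disjoint[OF e _ _ \<open>j \<noteq> k\<close>])
qed

lemma axis_partition_cover:
  "(\<Union>j\<in>{0..CARD('n) + 1}. axis_partition e j) = (UNIV :: (real^'n) set)"
  by (auto simp: axis_partition_def)

lemma axis_partition_zero [simp]: "axis_partition e 0 = {0}"
  by (simp add: axis_partition_def axis_cell_def)

lemma axis_partition_support_invariant:
  assumes "vec_support x = vec_support y"
  shows "x \<in> axis_partition e j \<longleftrightarrow> y \<in> axis_partition e j"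
  using assms by (simp add: axis_partition_def mem_axis_cell_iff)

lemma axis_partition_control_step:
  fixes M :: "real^'n^'n" and e :: "nat \<Rightarrow> 'n::finite"
  assumes e: "bij_betw e {1..CARD('n)} UNIV"
    and M: "\<forall>k l. k \<noteq> l \<longrightarrow> M $ k $ l = 0" "\<forall>k. M $ k $ k \<noteq> 0"
    and i: "i \<in> {1..CARD('n)}" and b: "vec_support b = {e i}"
    and j: "j \<in> {1..CARD('n) + 1}" and x: "x \<in> axis_partition e j"
  obtains \<mu> where "\<mu> \<noteq> 0"
    "M *v x + \<mu> *\<^sub>R b \<in> axis_partition e (if j = i then i else CARD('n) + 1)"
proof -
  obtain \<mu> where "\<mu> \<noteq> 0" and supp: "vec_support (M *v x + \<mu> *\<^sub>R b) = insert (e i) (vec_support x)"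
    using vec_support_diagonal_mult_add_axis[OF M b] by blast
  consider "j = i" | "j \<in> {1..CARD('n)}" "j \<noteq> i" | "j = CARD('n) + 1"
    using j by fastforce
  then have "M *v x + \<mu> *\<^sub>R b \<in> axis_partition e (if j = i then i else CARD('n) + 1)"
  proof cases
    case 1
    then show ?thesis
      using x i supp by (simp add: mem_axis_partition_iff_support)
  next
    case 2
    then have "e i \<noteq> e j"
      using inj_onD[OF bij_betw_imp_inj_on[OF e], of i j] i by auto
    moreover have "vec_support x = {e j}"
      using 2 x by (simp add: mem_axis_partition_iff_support)
    ultimately have "\<forall>p. \<not> vec_support (M *v x + \<mu> *\<^sub>R b) \<subseteq> {p}"
      using supp by auto
    \<comment> \<open>plain simp would rewrite CARD('n) + 1 to Suc CARD('n) and miss the lemma\<close>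
    then show ?thesis
      using \<open>j \<noteq> i\<close> by (simp only: if_False mem_axis_partition_last_iff[OF e] simp_thms)
  next
    case 3
    have "\<forall>p. \<not> vec_support x \<subseteq> {p}"
      using x[unfolded 3 mem_axis_partition_last_iff[OF e]] .
    then have "\<forall>p. \<not> vec_support (M *v x + \<mu> *\<^sub>R b) \<subseteq> {p}"
      using supp by blast
    moreover have "j \<noteq> i"
      using 3 i by simp
    ultimately show ?thesis
      by (simp only: if_False mem_axis_partition_last_iff[OF e] simp_thms)
  qed
  with \<open>\<mu> \<noteq> 0\<close> that show ?thesis by blast
qed

lemma state_space_abstraction_axis_partition:
  fixes A :: "nat \<Rightarrow> real^'n^'n" and b :: "nat \<Rightarrow> real^'n" and e :: "nat \<Rightarrow> 'n::finite"
  assumes e: "bij_betw e {1..CARD('n)} UNIV"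
    and A: "\<And>i. i \<in> {1..CARD('n)} \<Longrightarrow> \<forall>k l. k \<noteq> l \<longrightarrow> A i $ k $ l = 0"
      "\<And>i. i \<in> {1..CARD('n)} \<Longrightarrow> \<forall>k. A i $ k $ k \<noteq> 0"
    and b: "\<And>i. i \<in> {1..CARD('n)} \<Longrightarrow> vec_support (b i) = {e i}"
  shows "state_space_abstraction UNIV {1..CARD('n)} A b UNIV (CARD('n) + 1) (axis_partition e)"
  unfolding state_space_abstraction_def
proof (intro conjI)
  show "axis_partition e 0 = {0}"
    by simp
  show "(\<Union>j\<in>{0..CARD('n) + 1}. axis_partition e j) = UNIV"
    by (rule axis_partition_cover)
  show "\<forall>j\<in>{0..CARD('n) + 1}. \<forall>k\<in>{0..CARD('n) + 1}. j \<noteq> k \<longrightarrow>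
      axis_partition e j \<inter> axis_partition e k = {}"
    using axis_partition_disjoint[OF e] by blast
  show "\<forall>j\<in>{1..CARD('n) + 1}. \<forall>i\<in>{1..CARD('n)}.
      \<exists>k\<in>{0..CARD('n) + 1}. \<forall>x\<in>axis_partition e j. A i *v x \<in> axis_partition e k"
  proof (intro ballI)
    fix j i assume "j \<in> {1..CARD('n) + 1}" "i \<in> {1..CARD('n)}"
    then show "\<exists>k\<in>{0..CARD('n) + 1}. \<forall>x\<in>axis_partition e j. A i *v x \<in> axis_partition e k"
      using axis_partition_support_invariant[OF vec_support_diagonal_mult[OF A]]
      by (intro bexI[of _ j]) auto
  qed
  show "\<forall>j\<in>{1..CARD('n) + 1}. \<forall>i\<in>{1..CARD('n)}. \<exists>l\<in>{0..CARD('n) + 1}.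
      \<forall>x\<in>axis_partition e j. \<exists>\<mu>\<in>UNIV - {0}. A i *v x + \<mu> *\<^sub>R b i \<in> axis_partition e l"
  proof (intro ballI)
    fix j i assume j: "j \<in> {1..CARD('n) + 1}" and i: "i \<in> {1..CARD('n)}"
    have "\<exists>\<mu>\<in>UNIV - {0}.
        A i *v x + \<mu> *\<^sub>R b i \<in> axis_partition e (if j = i then i else CARD('n) + 1)"
      if "x \<in> axis_partition e j" for x
      using axis_partition_control_step[OF e A[OF i] i b[OF i] j that] by blast
    moreover have "(if j = i then i else CARD('n) + 1) \<in> {0..CARD('n) + 1}"
      using i by auto
    ultimately show "\<exists>l\<in>{0..CARD('n) + 1}.
        \<forall>x\<in>axis_partition e j. \<exists>\<mu>\<in>UNIV - {0}. A i *v x + \<mu> *\<^sub>R b i \<in> axis_partition e l"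
      by blast
  qed
qed

theorem proposition1:
  fixes A :: "nat \<Rightarrow> real^'d^'d" and b :: "nat \<Rightarrow> real^'d" and e :: "nat \<Rightarrow> 'd"
  assumes e: "bij_betw e {1..CARD('d)} UNIV"
    and A_diag: "\<forall>i\<in>{1..CARD('d)}. \<forall>k l. k \<noteq> l \<longrightarrow> A i $ k $ l = 0"
    and A_nz: "\<forall>i\<in>{1..CARD('d)}. \<forall>k. A i $ k $ k \<noteq> 0"
    and b_nz: "\<forall>i\<in>{1..CARD('d)}. b i $ e i \<noteq> 0"
    and b_zero: "\<forall>i\<in>{1..CARD('d)}. \<forall>k. k \<noteq> e i \<longrightarrow> b i $ k = 0"
  shows "let Y = (\<lambda>j::nat. if j = 0 then {0::real^'d}
                   else {x. x $ e j \<noteq> 0 \<and> (\<forall>k. k \<noteq> e j \<longrightarrow> x $ k = 0)})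
         in state_space_abstraction UNIV {1..CARD('d)} A b UNIV (CARD('d) + 1)
              (\<lambda>j. if j \<le> CARD('d) then Y j else UNIV - (\<Union>k\<in>{0..CARD('d)}. Y k))"
proof -
  have b_support: "vec_support (b i) = {e i}" if "i \<in> {1..CARD('d)}" for i
    using b_nz b_zero that by (auto simp: vec_support_def)
  have "state_space_abstraction UNIV {1..CARD('d)} A b UNIV (CARD('d) + 1) (axis_partition e)"
    by (rule state_space_abstraction_axis_partition[OF e]) (use A_diag A_nz b_support in auto)
  then show ?thesis
    by (simp only: Let_def axis_partition_def[abs_def] axis_cell_def[abs_def])
qed

end
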